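(* Let $G$ be a group and $n$ a positive integer. If $x \in \gamma_j(G)$ and $y \in \gamma_j(G)^4\gamma_{j+1}(G)$ for some $1 \leq j \leq n$, then $(xy)^{4^{n-j}} \equiv x^{4^{n-j}} \pmod{N_{n+1,j}(G)}$.
   Context: $\gamma_1(G) = G$, $\gamma_{i+1}(G) = [\gamma_i(G), G]$. For a subgroup $H$ and integer $m$, $H^m$ is the subgroup generated by all $m$-th powers. For $1 \le k \le n$, $N_{n,k}(G) = \gamma_k(G)^{4^{n-k}}\gamma_{k+1}(G)^{4^{n-k-1}} \cdots \gamma_n(G)$. *)

theory Defs
  imports "HOL-Algebra.Algebra"
begin

definition comm_subgroup :: "('a, 'b) monoid_scheme \<Rightarrow> 'a set \<Rightarrow> 'a set \<Rightarrow> 'a set" where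
  "comm_subgroup G H K = generate G {x \<otimes>\<^bsub>G\<^esub> y \<otimes>\<^bsub>G\<^esub> inv\<^bsub>G\<^esub> x \<otimes>\<^bsub>G\<^esub> inv\<^bsub>G\<^esub> y | x y. x \<in> H \<and> y \<in> K}"

text \<open>lcs G i is gamma_(i+1)(G).\<close>
primrec lcs :: "('a, 'b) monoid_scheme \<Rightarrow> nat \<Rightarrow> 'a set" where
  "lcs G 0 = carrier G"
| "lcs G (Suc i) = comm_subgroup G (lcs G i) (carrier G)"

definition gamma :: "('a, 'b) monoid_scheme \<Rightarrow> nat \<Rightarrow> 'a set" where
  "gamma G k = lcs G (k - 1)"

definition pow_subgroup :: "('a, 'b) monoid_scheme \<Rightarrow> 'a set \<Rightarrow> nat \<Rightarrow> 'a set" where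
  "pow_subgroup G H m = generate G {h [^]\<^bsub>G\<^esub> m | h. h \<in> H}"

text \<open>N_{n,k}(G) = gamma_k^{4^{n-k}} gamma_{k+1}^{4^{n-k-1}} ... gamma_n, as a product of subsets.\<close>
definition Nnk :: "('a, 'b) monoid_scheme \<Rightarrow> nat \<Rightarrow> nat \<Rightarrow> 'a set" where
  "Nnk G n k = foldr (\<lambda>i S. pow_subgroup G (gamma G i) (4 ^ (n - i)) <#>\<^bsub>G\<^esub> S) [k..<n] (gamma G n)"

end

theory Submission
  imports Defs
begin

text \<open>
  The statement holds for every exponent q in place of 4. Call c central modulo a normal subgroup K
  if all commutators [c, z] lie in K, and q-central modulo K if moreover c^q \<in> K; these are the
  preimages of the centre of G/K and of its q-torsion, hence subgroups. Computing in G/K: if y is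
  q-central modulo K then (xy)^q \<equiv> x^q y^q \<equiv> x^q, and if every [u, z] is q-central modulo K then
  [u^q, z] \<equiv> [u, z]^q \<equiv> 1, so u^q is central modulo K.

  The second fact drives an induction on m - k showing that \<gamma>_k^(q^(m-k)) is central modulo
  N(m+1, k+1), and therefore every element of N(m, l) is q-central modulo N(m+1, l). By the first
  fact, the q-th power of xy with x \<in> N(a, j) and y \<in> N(a+1, j) is x^q w with x^q \<in> N(a+1, j) and
  w \<in> N(a+2, j); iterating this n - j times from a = j gives the theorem.
\<close>

definition commutator :: "('a, 'b) monoid_scheme \<Rightarrow> 'a \<Rightarrow> 'a \<Rightarrow> 'a" where
  "commutator G a b = a \<otimes>\<^bsub>G\<^esub> b \<otimes>\<^bsub>G\<^esub> inv\<^bsub>G\<^esub> a \<otimes>\<^bsub>G\<^esub> inv\<^bsub>G\<^esub> b"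

definition center :: "('a, 'b) monoid_scheme \<Rightarrow> 'a set" where
  "center G = {c \<in> carrier G. \<forall>z\<in>carrier G. c \<otimes>\<^bsub>G\<^esub> z = z \<otimes>\<^bsub>G\<^esub> c}"

context group
begin

lemma inv_mult_cancel [simp]: "x \<in> carrier G \<Longrightarrow> y \<in> carrier G \<Longrightarrow> inv x \<otimes> (x \<otimes> y) = y"
  by (simp add: m_assoc[symmetric])

lemma mult_inv_cancel [simp]: "x \<in> carrier G \<Longrightarrow> y \<in> carrier G \<Longrightarrow> x \<otimes> (inv x \<otimes> y) = y"
  by (simp add: m_assoc[symmetric])

lemma commutator_closed [simp]:
  "a \<in> carrier G \<Longrightarrow> b \<in> carrier G \<Longrightarrow> commutator G a b \<in> carrier G"
  by (simp add: commutator_def)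

lemma commutator_eq_one_iff:
  assumes "a \<in> carrier G" "b \<in> carrier G"
  shows "commutator G a b = \<one> \<longleftrightarrow> a \<otimes> b = b \<otimes> a"
proof -
  have "commutator G a b = (a \<otimes> b) \<otimes> inv (b \<otimes> a)"
    using assms by (simp add: commutator_def m_assoc inv_mult_group)
  then show ?thesis
    using assms by (simp add: inv_solve_right')
qed

lemma commutator_pow_left:
  assumes u: "u \<in> carrier G" and z: "z \<in> carrier G"
    and commutes: "u \<otimes> commutator G u z = commutator G u z \<otimes> u"
  shows "commutator G (u [^] (k::nat)) z = commutator G u z [^] k"
proof (induction k)
  case 0
  show ?case using z by (simp add: commutator_def)
next
  case (Suc k)
  define d where "d = commutator G u z"
  have d: "d \<in> carrier G" using u z by (simp add: d_def)
  have "commutator G (u [^] Suc k) z = u \<otimes> commutator G (u [^] k) z \<otimes> inv u \<otimes> d"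
    using u z unfolding nat_pow_Suc2[OF u] by (simp add: d_def commutator_def m_assoc inv_mult_group)
  also have "\<dots> = (u \<otimes> d [^] k) \<otimes> inv u \<otimes> d"
    using Suc.IH by (simp add: d_def)
  also have "\<dots> = (d [^] k \<otimes> u) \<otimes> inv u \<otimes> d"
    using group_commutes_pow[OF commutes[folded d_def, symmetric] d u] by simp
  also have "\<dots> = d [^] Suc k"
    using u d by (simp add: m_assoc)
  finally show ?case by (simp add: d_def)
qed

lemma subgroup_center: "subgroup (center G) G"
proof (rule subgroupI)
  show "center G \<subseteq> carrier G" by (auto simp: center_def)
  have "\<one> \<in> center G" by (simp add: center_def)
  then show "center G \<noteq> {}" by blast
next
  fix c assume c: "c \<in> center G"
  have "inv c \<otimes> z = z \<otimes> inv c" if z: "z \<in> carrier G" for z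
  proof -
    have cc: "c \<in> carrier G" and cz: "c \<otimes> z = z \<otimes> c" using c z unfolding center_def by blast+
    have "inv c \<otimes> z = inv c \<otimes> (z \<otimes> c) \<otimes> inv c" using cc z by (simp add: m_assoc)
    also have "\<dots> = z \<otimes> inv c" using cc z by (simp add: cz[symmetric] m_assoc[symmetric])
    finally show ?thesis .
  qed
  then show "inv c \<in> center G" using c unfolding center_def by blast
next
  fix a b assume a: "a \<in> center G" and b: "b \<in> center G"
  have "a \<otimes> b \<otimes> z = z \<otimes> (a \<otimes> b)" if z: "z \<in> carrier G" for z
  proof -
    have ac: "a \<in> carrier G" and az: "a \<otimes> z = z \<otimes> a"
      and bc: "b \<in> carrier G" and bz: "b \<otimes> z = z \<otimes> b"
      using a b z unfolding center_def by blast+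
    have "a \<otimes> b \<otimes> z = a \<otimes> z \<otimes> b" using ac bc z by (simp add: m_assoc bz)
    also have "\<dots> = z \<otimes> (a \<otimes> b)" using ac bc z by (simp add: m_assoc az)
    finally show ?thesis .
  qed
  then show "a \<otimes> b \<in> center G" using a b unfolding center_def by blast
qed

lemma subgroup_center_torsion: "subgroup {c \<in> center G. c [^] (q::nat) = \<one>} G"
proof -
  interpret Z: subgroup "center G" G by (rule subgroup_center)
  show ?thesis
  proof (rule subgroupI)
    show "{c \<in> center G. c [^] q = \<one>} \<subseteq> carrier G" by auto
    have "\<one> \<in> {c \<in> center G. c [^] q = \<one>}" by simp
    then show "{c \<in> center G. c [^] q = \<one>} \<noteq> {}" by blast
  next
    fix c assume c: "c \<in> {c \<in> center G. c [^] q = \<one>}"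
    then have "inv c [^] q = \<one>" using Z.mem_carrier by (simp add: nat_pow_inv)
    then show "inv c \<in> {c \<in> center G. c [^] q = \<one>}" using c by simp
  next
    fix a b
    assume a: "a \<in> {c \<in> center G. c [^] q = \<one>}" and b: "b \<in> {c \<in> center G. c [^] q = \<one>}"
    have "a \<otimes> b = b \<otimes> a" and "a \<in> carrier G" "b \<in> carrier G"
      using a b unfolding center_def by blast+
    then have "(a \<otimes> b) [^] q = \<one>" using a b by (simp add: pow_mult_distrib)
    then show "a \<otimes> b \<in> {c \<in> center G. c [^] q = \<one>}" using a b by simp
  qed
qed

end

lemma (in group_hom) hom_commutator:
  "a \<in> carrier G \<Longrightarrow> b \<in> carrier G \<Longrightarrow> h (commutator G a b) = commutator H (h a) (h b)"
  by (simp add: commutator_def)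

lemma (in group_hom) subgroup_vimage:
  assumes "subgroup K H"
  shows "subgroup (h -` K \<inter> carrier G) G"
proof (rule G.subgroupI)
  have "\<one>\<^bsub>G\<^esub> \<in> h -` K \<inter> carrier G"
    using subgroup.one_closed[OF assms] by simp
  then show "h -` K \<inter> carrier G \<noteq> {}" by blast
next
  fix x assume "x \<in> h -` K \<inter> carrier G"
  then show "inv x \<in> h -` K \<inter> carrier G"
    using subgroup.m_inv_closed[OF assms] by auto
next
  fix x y assume "x \<in> h -` K \<inter> carrier G" "y \<in> h -` K \<inter> carrier G"
  then show "x \<otimes>\<^bsub>G\<^esub> y \<in> h -` K \<inter> carrier G"
    using subgroup.m_closed[OF assms] by auto
qed auto

definition central_mod :: "('a, 'b) monoid_scheme \<Rightarrow> 'a set \<Rightarrow> 'a set" where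
  "central_mod G K = {c \<in> carrier G. \<forall>z\<in>carrier G. commutator G c z \<in> K}"

definition central_torsion_mod :: "('a, 'b) monoid_scheme \<Rightarrow> nat \<Rightarrow> 'a set \<Rightarrow> 'a set" where
  "central_torsion_mod G q K = {c \<in> central_mod G K. c [^]\<^bsub>G\<^esub> q \<in> K}"

lemma central_mod_mono: "K \<subseteq> K' \<Longrightarrow> central_mod G K \<subseteq> central_mod G K'"
  unfolding central_mod_def by auto

lemma central_torsion_mod_mono:
  "K \<subseteq> K' \<Longrightarrow> central_torsion_mod G q K \<subseteq> central_torsion_mod G q K'"
  unfolding central_torsion_mod_def using central_mod_mono by blast

context normal
begin

lemma group_hom_rcos: "group_hom G (G Mod H) (\<lambda>x. H #> x)"
  by (simp add: group_hom_def group_hom_axioms_def is_group factorgroup_is_group r_coset_hom_Mod)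

lemma rcos_eq_one_iff: "x \<in> carrier G \<Longrightarrow> H #> x = \<one>\<^bsub>G Mod H\<^esub> \<longleftrightarrow> x \<in> H"
  unfolding one_FactGroup using coset_join1 coset_join2 subgroup_axioms by blast

lemma rcos_commutator_in_iff:
  assumes "c \<in> carrier G" "z \<in> carrier G"
  shows "commutator G c z \<in> H \<longleftrightarrow>
    (H #> c) \<otimes>\<^bsub>G Mod H\<^esub> (H #> z) = (H #> z) \<otimes>\<^bsub>G Mod H\<^esub> (H #> c)"
proof -
  interpret \<pi>: group_hom G "G Mod H" "\<lambda>x. H #> x" by (rule group_hom_rcos)
  have "commutator G c z \<in> H \<longleftrightarrow> H #> commutator G c z = \<one>\<^bsub>G Mod H\<^esub>"
    using assms by (simp only: rcos_eq_one_iff commutator_closed)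
  also have "H #> commutator G c z = commutator (G Mod H) (H #> c) (H #> z)"
    using assms by (rule \<pi>.hom_commutator)
  finally show ?thesis
    using assms by (simp only: \<pi>.H.commutator_eq_one_iff \<pi>.hom_closed)
qed

lemma central_mod_eq_vimage:
  "central_mod G H = (\<lambda>x. H #> x) -` center (G Mod H) \<inter> carrier G"
proof -
  have "H #> c \<in> center (G Mod H) \<longleftrightarrow> (\<forall>z\<in>carrier G. commutator G c z \<in> H)"
    if "c \<in> carrier G" for c
    using that rcos_commutator_in_iff[OF that] unfolding center_def carrier_FactGroup by blast
  then show ?thesis
    unfolding central_mod_def by blast
qed

lemma central_torsion_mod_eq_vimage:
  "central_torsion_mod G q H =
     (\<lambda>x. H #> x) -` {c \<in> center (G Mod H). c [^]\<^bsub>G Mod H\<^esub> q = \<one>\<^bsub>G Mod H\<^esub>} \<inter> carrier G"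
proof -
  interpret \<pi>: group_hom G "G Mod H" "\<lambda>x. H #> x" by (rule group_hom_rcos)
  have "c [^] q \<in> H \<longleftrightarrow> (H #> c) [^]\<^bsub>G Mod H\<^esub> q = \<one>\<^bsub>G Mod H\<^esub>" if "c \<in> carrier G" for c
    using that by (simp only: rcos_eq_one_iff[symmetric] nat_pow_closed \<pi>.hom_nat_pow)
  then show ?thesis
    unfolding central_torsion_mod_def central_mod_eq_vimage by blast
qed

lemma rcos_eq_imp_inv_mult_mem:
  assumes "H #> a = H #> b" "a \<in> carrier G" "b \<in> carrier G"
  shows "inv b \<otimes> a \<in> H"
proof -
  have "a \<in> H #> b" using assms rcos_self subgroup_axioms by metis
  then have "a \<otimes> inv b \<in> H" using assms(3) rcos_module_imp is_group by blast
  then have "inv b \<otimes> (a \<otimes> inv b) \<otimes> inv (inv b) \<in> H"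
    using assms(3) inv_op_closed2 by blast
  then show ?thesis using assms(2,3) by (simp add: m_assoc)
qed

lemma rcos_pow_mult_central_torsion_mod:
  assumes x: "x \<in> carrier G" and y: "y \<in> central_torsion_mod G q H"
  shows "H #> (x \<otimes> y) [^] q = H #> x [^] q"
proof -
  interpret \<pi>: group_hom G "G Mod H" "\<lambda>x. H #> x" by (rule group_hom_rcos)
  have yc: "y \<in> carrier G"
    and Y: "H #> y \<in> center (G Mod H)" "(H #> y) [^]\<^bsub>G Mod H\<^esub> q = \<one>\<^bsub>G Mod H\<^esub>"
    using y unfolding central_torsion_mod_eq_vimage by blast+
  have "(H #> x) \<otimes>\<^bsub>G Mod H\<^esub> (H #> y) = (H #> y) \<otimes>\<^bsub>G Mod H\<^esub> (H #> x)"
    using Y(1) \<pi>.hom_closed[OF x] unfolding center_def by blast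
  then have "((H #> x) \<otimes>\<^bsub>G Mod H\<^esub> (H #> y)) [^]\<^bsub>G Mod H\<^esub> q =
      (H #> x) [^]\<^bsub>G Mod H\<^esub> q \<otimes>\<^bsub>G Mod H\<^esub> (H #> y) [^]\<^bsub>G Mod H\<^esub> q"
    using \<pi>.H.pow_mult_distrib \<pi>.hom_closed x yc by blast
  then show ?thesis
    using x yc Y(2)
    by (simp only: \<pi>.hom_mult \<pi>.hom_nat_pow m_closed \<pi>.H.r_one \<pi>.H.nat_pow_closed \<pi>.hom_closed)
qed

lemma pow_mem_central_mod:
  assumes u: "u \<in> carrier G"
    and commutators: "\<And>z. z \<in> carrier G \<Longrightarrow> commutator G u z \<in> central_torsion_mod G q H"
  shows "u [^] q \<in> central_mod G H"
proof -
  interpret \<pi>: group_hom G "G Mod H" "\<lambda>x. H #> x" by (rule group_hom_rcos)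
  have "commutator G (u [^] q) z \<in> H" if z: "z \<in> carrier G" for z
  proof -
    let ?D = "commutator (G Mod H) (H #> u) (H #> z)"
    have "H #> commutator G u z \<in> center (G Mod H)"
      "(H #> commutator G u z) [^]\<^bsub>G Mod H\<^esub> q = \<one>\<^bsub>G Mod H\<^esub>"
      using commutators[OF z] unfolding central_torsion_mod_eq_vimage by blast+
    then have D: "?D \<in> center (G Mod H)" "?D [^]\<^bsub>G Mod H\<^esub> q = \<one>\<^bsub>G Mod H\<^esub>"
      by (simp_all only: \<pi>.hom_commutator[OF u z])
    have "(H #> u) \<otimes>\<^bsub>G Mod H\<^esub> ?D = ?D \<otimes>\<^bsub>G Mod H\<^esub> (H #> u)"
      using D(1) \<pi>.hom_closed[OF u] unfolding center_def by blast
    then have "H #> commutator G (u [^] q) z = \<one>\<^bsub>G Mod H\<^esub>"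
      using u z D(2) by (simp only: \<pi>.hom_commutator \<pi>.hom_nat_pow nat_pow_closed \<pi>.hom_closed
          \<pi>.H.commutator_pow_left)
    then show ?thesis using u z by (simp only: rcos_eq_one_iff commutator_closed nat_pow_closed)
  qed
  then show ?thesis using u by (simp add: central_mod_def)
qed

end

lemma (in group) subgroup_central_mod:
  assumes "K \<lhd> G"
  shows "subgroup (central_mod G K) G"
proof -
  interpret K: normal K G by (rule assms)
  interpret \<pi>: group_hom G "G Mod K" "\<lambda>x. K #> x" by (rule K.group_hom_rcos)
  show ?thesis
    unfolding K.central_mod_eq_vimage by (rule \<pi>.subgroup_vimage[OF \<pi>.H.subgroup_center])
qed

lemma (in group) subgroup_central_torsion_mod:
  assumes "K \<lhd> G"
  shows "subgroup (central_torsion_mod G q K) G"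
proof -
  interpret K: normal K G by (rule assms)
  interpret \<pi>: group_hom G "G Mod K" "\<lambda>x. K #> x" by (rule K.group_hom_rcos)
  show ?thesis
    unfolding K.central_torsion_mod_eq_vimage
    by (rule \<pi>.subgroup_vimage[OF \<pi>.H.subgroup_center_torsion])
qed

context group
begin

lemma comm_subgroup_carrier_normal:
  assumes "K \<lhd> G"
  shows "comm_subgroup G K (carrier G) \<lhd> G"
  unfolding comm_subgroup_def
proof (rule normal_generateI)
  interpret K: normal K G by (rule assms)
  show "{x \<otimes> y \<otimes> inv x \<otimes> inv y |x y. x \<in> K \<and> y \<in> carrier G} \<subseteq> carrier G"
    using K.subset by blast
  fix h g
  assume "h \<in> {x \<otimes> y \<otimes> inv x \<otimes> inv y |x y. x \<in> K \<and> y \<in> carrier G}" and g: "g \<in> carrier G"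
  then obtain x y where h: "h = x \<otimes> y \<otimes> inv x \<otimes> inv y" and x: "x \<in> K" and y: "y \<in> carrier G"
    by blast
  have "g \<otimes> h \<otimes> inv g =
      (g \<otimes> x \<otimes> inv g) \<otimes> (g \<otimes> y \<otimes> inv g) \<otimes> inv (g \<otimes> x \<otimes> inv g) \<otimes> inv (g \<otimes> y \<otimes> inv g)"
    using K.mem_carrier[OF x] y g by (simp add: h m_assoc inv_mult_group)
  then show "g \<otimes> h \<otimes> inv g \<in> {x \<otimes> y \<otimes> inv x \<otimes> inv y |x y. x \<in> K \<and> y \<in> carrier G}"
    using K.inv_op_closed2[OF g x] g y by blast
qed

lemma subset_central_mod_comm_subgroup:
  "K \<subseteq> carrier G \<Longrightarrow> K \<subseteq> central_mod G (comm_subgroup G K (carrier G))"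
  unfolding central_mod_def comm_subgroup_def commutator_def by (blast intro: generate.incl)

lemma lcs_normal: "lcs G i \<lhd> G"
  by (induction i) (simp_all add: normal_self comm_subgroup_carrier_normal)

lemma gamma_normal: "gamma G i \<lhd> G"
  unfolding gamma_def by (rule lcs_normal)

lemma gamma_subset: "gamma G i \<subseteq> carrier G"
  using normal_imp_subgroup[OF gamma_normal] subgroup.subset by blast

lemma gamma_subset_central_mod: "gamma G i \<subseteq> central_mod G (gamma G (Suc i))"
proof (cases i)
  case 0
  then show ?thesis by (auto simp: gamma_def central_mod_def)
next
  case (Suc j)
  then show ?thesis
    using subset_central_mod_comm_subgroup[OF gamma_subset[of i]] by (simp add: gamma_def)
qed

lemma pow_subgroup_normal:
  assumes "K \<lhd> G"
  shows "pow_subgroup G K m \<lhd> G"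
  unfolding pow_subgroup_def
proof (rule normal_generateI)
  interpret K: normal K G by (rule assms)
  show "{h [^] m |h. h \<in> K} \<subseteq> carrier G" using K.subset by blast
  fix s g assume "s \<in> {h [^] m |h. h \<in> K}" and g: "g \<in> carrier G"
  then obtain h where s: "s = h [^] m" and h: "h \<in> K" by blast
  have "g \<otimes> h [^] n \<otimes> inv g = (g \<otimes> h \<otimes> inv g) [^] n" for n :: nat
  proof (induction n)
    case 0
    then show ?case using g by simp
  next
    case (Suc n)
    have "g \<otimes> h [^] Suc n \<otimes> inv g = (g \<otimes> h [^] n \<otimes> inv g) \<otimes> (g \<otimes> h \<otimes> inv g)"
      using g K.mem_carrier[OF h] by (simp add: m_assoc)
    then show ?case using Suc.IH by simp
  qed
  then show "g \<otimes> s \<otimes> inv g \<in> {h [^] m |h. h \<in> K}"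
    using s K.inv_op_closed2[OF g h] by blast
qed

lemma pow_mem_pow_subgroup: "K \<subseteq> carrier G \<Longrightarrow> h \<in> K \<Longrightarrow> h [^] m \<in> pow_subgroup G K m"
  unfolding pow_subgroup_def by (blast intro: generate.incl)

lemma pow_subgroup_le:
  assumes "subgroup S G" "K \<subseteq> carrier G" "\<And>h. h \<in> K \<Longrightarrow> h [^] m \<in> S"
  shows "pow_subgroup G K m \<subseteq> S"
  unfolding pow_subgroup_def by (rule generate_subgroup_incl) (use assms in blast)+

lemma set_mult_normal:
  assumes A: "A \<lhd> G" and B: "B \<lhd> G"
  shows "A <#> B \<lhd> G"
proof (rule normal_invI)
  interpret A: normal A G by (rule A)
  interpret B: normal B G by (rule B)
  show "subgroup (A <#> B) G" by (rule mult_norm_subgroup[OF A B.subgroup_axioms])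
  fix g x assume g: "g \<in> carrier G" and "x \<in> A <#> B"
  then obtain a b where x: "x = a \<otimes> b" and a: "a \<in> A" and b: "b \<in> B"
    unfolding set_mult_def by blast
  have "g \<otimes> x \<otimes> inv g = (g \<otimes> a \<otimes> inv g) \<otimes> (g \<otimes> b \<otimes> inv g)"
    using g A.mem_carrier[OF a] B.mem_carrier[OF b] by (simp add: x m_assoc)
  then show "g \<otimes> x \<otimes> inv g \<in> A <#> B"
    using A.inv_op_closed2[OF g a] B.inv_op_closed2[OF g b] unfolding set_mult_def by blast
qed

lemma set_mult_subset_subgroup: "subgroup S G \<Longrightarrow> A \<subseteq> S \<Longrightarrow> B \<subseteq> S \<Longrightarrow> A <#> B \<subseteq> S"
  unfolding set_mult_def by (blast intro: subgroup.m_closed)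

lemma subset_set_mult_left: "subgroup A G \<Longrightarrow> B \<subseteq> carrier G \<Longrightarrow> B \<subseteq> A <#> B"
  unfolding set_mult_def by (force intro: subgroup.one_closed)

lemma subset_set_mult_right: "subgroup B G \<Longrightarrow> A \<subseteq> carrier G \<Longrightarrow> A \<subseteq> A <#> B"
  unfolding set_mult_def by (force intro: subgroup.one_closed)

end

definition gamma_power_product :: "('a, 'b) monoid_scheme \<Rightarrow> nat \<Rightarrow> nat \<Rightarrow> nat \<Rightarrow> 'a set" where
  "gamma_power_product G q n k =
     foldr (\<lambda>i S. pow_subgroup G (gamma G i) (q ^ (n - i)) <#>\<^bsub>G\<^esub> S) [k..<n] (gamma G n)"

lemma Nnk_eq_gamma_power_product: "Nnk G n k = gamma_power_product G 4 n k"
  by (simp add: Nnk_def gamma_power_product_def)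

lemma gamma_power_product_less:
  "l < m \<Longrightarrow> gamma_power_product G q m l =
     pow_subgroup G (gamma G l) (q ^ (m - l)) <#>\<^bsub>G\<^esub> gamma_power_product G q m (Suc l)"
  by (simp add: gamma_power_product_def upt_conv_Cons)

lemma gamma_power_product_ge: "m \<le> l \<Longrightarrow> gamma_power_product G q m l = gamma G m"
  by (simp add: gamma_power_product_def)

context group
begin

lemma gamma_power_product_normal: "gamma_power_product G q m l \<lhd> G"
proof (cases "l \<le> m")
  case True
  then show ?thesis
  proof (induction rule: inc_induct)
    case base
    then show ?case by (simp add: gamma_power_product_ge gamma_normal)
  next
    case (step k)
    then show ?case
      by (simp add: gamma_power_product_less set_mult_normal pow_subgroup_normal gamma_normal)
  qed
next
  case False
  then show ?thesis by (simp add: gamma_power_product_ge gamma_normal)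
qed

lemma gamma_power_product_subset: "gamma_power_product G q m l \<subseteq> carrier G"
  using normal_imp_subgroup[OF gamma_power_product_normal] subgroup.subset by blast

lemma gamma_power_product_Suc_subset:
  "gamma_power_product G q m (Suc l) \<subseteq> gamma_power_product G q m l"
proof (cases "l < m")
  case True
  then show ?thesis
    using subset_set_mult_left[OF normal_imp_subgroup[OF pow_subgroup_normal[OF gamma_normal]]
        subgroup.subset[OF normal_imp_subgroup[OF gamma_power_product_normal]]]
    by (simp add: gamma_power_product_less)
next
  case False
  then show ?thesis by (simp add: gamma_power_product_ge)
qed

lemma pow_gamma_subset_gamma_power_product:
  "l < m \<Longrightarrow> pow_subgroup G (gamma G l) (q ^ (m - l)) \<subseteq> gamma_power_product G q m l"
  using subset_set_mult_right[OF normal_imp_subgroup[OF gamma_power_product_normal]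
      subgroup.subset[OF normal_imp_subgroup[OF pow_subgroup_normal[OF gamma_normal]]]]
  by (simp add: gamma_power_product_less)

lemma gamma_power_product_subset_central_torsion_modI:
  assumes "l \<le> m"
    and central: "\<And>k. l \<le> k \<Longrightarrow> k < m \<Longrightarrow>
      pow_subgroup G (gamma G k) (q ^ (m - k)) \<subseteq> central_mod G (gamma_power_product G q (Suc m) (Suc k))"
  shows "gamma_power_product G q m l \<subseteq> central_torsion_mod G q (gamma_power_product G q (Suc m) l)"
  using assms(1)
proof (induction rule: inc_induct)
  case base
  show ?case
  proof
    fix z assume "z \<in> gamma_power_product G q m m"
    then have z: "z \<in> gamma G m" by (simp add: gamma_power_product_ge)
    have "gamma G (Suc m) \<subseteq> gamma_power_product G q (Suc m) m"
      using gamma_power_product_Suc_subset[of q "Suc m" m] by (simp add: gamma_power_product_ge)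
    moreover have "z \<in> central_mod G (gamma G (Suc m))"
      using z gamma_subset_central_mod by blast
    ultimately have "z \<in> central_mod G (gamma_power_product G q (Suc m) m)"
      using central_mod_mono by blast
    moreover have "z [^] q \<in> pow_subgroup G (gamma G m) (q ^ (Suc m - m))"
      using pow_mem_pow_subgroup[OF gamma_subset z] by simp
    then have "z [^] q \<in> gamma_power_product G q (Suc m) m"
      using pow_gamma_subset_gamma_power_product[of m "Suc m" q] by blast
    ultimately show "z \<in> central_torsion_mod G q (gamma_power_product G q (Suc m) m)"
      by (simp add: central_torsion_mod_def)
  qed
next
  case (step k)
  let ?T = "central_torsion_mod G q (gamma_power_product G q (Suc m) k)"
  have T: "subgroup ?T G"
    by (rule subgroup_central_torsion_mod[OF gamma_power_product_normal])
  have "pow_subgroup G (gamma G k) (q ^ (m - k)) \<subseteq> ?T"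
  proof (rule pow_subgroup_le[OF T gamma_subset])
    fix h assume h: "h \<in> gamma G k"
    have "h [^] (q ^ (m - k)) \<in> central_mod G (gamma_power_product G q (Suc m) (Suc k))"
      using central[OF step(1,2)] pow_mem_pow_subgroup[OF gamma_subset h] by (rule subsetD)
    then have "h [^] (q ^ (m - k)) \<in> central_mod G (gamma_power_product G q (Suc m) k)"
      by (rule subsetD[OF central_mod_mono[OF gamma_power_product_Suc_subset]])
    moreover have "(h [^] (q ^ (m - k))) [^] q = h [^] (q ^ (Suc m - k))"
      using subsetD[OF gamma_subset h] step(2) by (simp add: nat_pow_pow Suc_diff_le mult.commute)
    moreover have "h [^] (q ^ (Suc m - k)) \<in> gamma_power_product G q (Suc m) k"
      using pow_mem_pow_subgroup[OF gamma_subset h] pow_gamma_subset_gamma_power_product[of k "Suc m"]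
        step(2) by auto
    ultimately show "h [^] (q ^ (m - k)) \<in> ?T"
      by (simp add: central_torsion_mod_def)
  qed
  moreover have "gamma_power_product G q m (Suc k) \<subseteq> ?T"
    using step.IH central_torsion_mod_mono[OF gamma_power_product_Suc_subset] by (rule order_trans)
  ultimately show ?case
    using set_mult_subset_subgroup[OF T] step(2) by (simp add: gamma_power_product_less)
qed

lemma pow_gamma_subset_central_mod:
  assumes "k \<le> m"
  shows "pow_subgroup G (gamma G k) (q ^ (m - k))
    \<subseteq> central_mod G (gamma_power_product G q (Suc m) (Suc k))"
  using assms
proof (induction "m - k" arbitrary: k m rule: less_induct)
  case less
  let ?K = "gamma_power_product G q (Suc m) (Suc k)"
  have Z: "subgroup (central_mod G ?K) G"
    by (rule subgroup_central_mod[OF gamma_power_product_normal])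
  show ?case
  proof (cases "k = m")
    case True
    show ?thesis
    proof (rule pow_subgroup_le[OF Z gamma_subset])
      fix g assume g: "g \<in> gamma G k"
      have "gamma G k \<subseteq> central_mod G ?K"
        using gamma_subset_central_mod[of k] True by (simp add: gamma_power_product_ge)
      then show "g [^] (q ^ (m - k)) \<in> central_mod G ?K"
        using g subsetD[OF gamma_subset g] True by auto
    qed
  next
    case False
    then obtain m' where m: "m = Suc m'" and km': "k \<le> m'"
      using less.prems by (cases m) auto
    have torsion: "gamma_power_product G q m (Suc k) \<subseteq> central_torsion_mod G q ?K"
    proof (rule gamma_power_product_subset_central_torsion_modI)
      show "Suc k \<le> m" using m km' by simp
      fix k' assume "Suc k \<le> k'" "k' < m"
      then show "pow_subgroup G (gamma G k') (q ^ (m - k'))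
          \<subseteq> central_mod G (gamma_power_product G q (Suc m) (Suc k'))"
        by (intro less.hyps) auto
    qed
    have central: "pow_subgroup G (gamma G k) (q ^ (m' - k))
        \<subseteq> central_mod G (gamma_power_product G q m (Suc k))"
      unfolding m using m km' by (intro less.hyps) auto
    show ?thesis
    proof (rule pow_subgroup_le[OF Z gamma_subset])
      fix g assume g: "g \<in> gamma G k"
      define u where "u = g [^] (q ^ (m' - k))"
      have u: "u \<in> carrier G" using subsetD[OF gamma_subset g] by (simp add: u_def)
      have "u \<in> central_mod G (gamma_power_product G q m (Suc k))"
        unfolding u_def using central pow_mem_pow_subgroup[OF gamma_subset g] by (rule subsetD)
      then have "commutator G u z \<in> central_torsion_mod G q ?K" if "z \<in> carrier G" for z
        using subsetD[OF torsion] that unfolding central_mod_def by blast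
      then have "u [^] q \<in> central_mod G ?K"
        by (rule normal.pow_mem_central_mod[OF gamma_power_product_normal u])
      moreover have "u [^] q = g [^] (q ^ (m - k))"
        using subsetD[OF gamma_subset g] m km'
        by (simp add: u_def nat_pow_pow Suc_diff_le mult.commute)
      ultimately show "g [^] (q ^ (m - k)) \<in> central_mod G ?K" by simp
    qed
  qed
qed

lemma gamma_power_product_subset_central_torsion_mod:
  "l \<le> m \<Longrightarrow>
    gamma_power_product G q m l \<subseteq> central_torsion_mod G q (gamma_power_product G q (Suc m) l)"
  by (rule gamma_power_product_subset_central_torsion_modI)
    (simp_all add: pow_gamma_subset_central_mod)

lemma pow_mult_inv_pow_mem_gamma_power_product:
  assumes "l \<le> a" "x \<in> gamma_power_product G q a l" "y \<in> gamma_power_product G q (Suc a) l"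
  shows "(x \<otimes> y) [^] (q ^ e) \<otimes> inv (x [^] (q ^ e)) \<in> gamma_power_product G q (a + 1 + e) l"
  using assms
proof (induction e arbitrary: a x y)
  case 0
  interpret N: normal "gamma_power_product G q (Suc a) l" G by (rule gamma_power_product_normal)
  have "x \<in> carrier G" "y \<in> carrier G"
    using 0(2,3) subsetD[OF gamma_power_product_subset] by auto
  then show ?case using N.inv_op_closed2[OF _ 0(3)] by simp
next
  case (Suc e)
  let ?K = "gamma_power_product G q (Suc (Suc a)) l"
  interpret K: normal ?K G by (rule gamma_power_product_normal)
  have x: "x \<in> carrier G" and y: "y \<in> carrier G"
    using Suc.prems(2,3) subsetD[OF gamma_power_product_subset] by auto
  have "y \<in> central_torsion_mod G q ?K"
    using Suc.prems(1) subsetD[OF gamma_power_product_subset_central_torsion_mod Suc.prems(3)] by simp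
  then have "?K #> (x \<otimes> y) [^] q = ?K #> x [^] q"
    by (rule K.rcos_pow_mult_central_torsion_mod[OF x])
  then have w: "inv (x [^] q) \<otimes> (x \<otimes> y) [^] q \<in> ?K"
    using x y by (intro K.rcos_eq_imp_inv_mult_mem) auto
  have "x [^] q \<in> gamma_power_product G q (Suc a) l"
    using subsetD[OF gamma_power_product_subset_central_torsion_mod Suc.prems(2)] Suc.prems(1)
    unfolding central_torsion_mod_def by blast
  from Suc.IH[OF _ this w] Suc.prems(1)
  have "(x [^] q \<otimes> (inv (x [^] q) \<otimes> (x \<otimes> y) [^] q)) [^] (q ^ e) \<otimes> inv ((x [^] q) [^] (q ^ e))
      \<in> gamma_power_product G q (Suc a + 1 + e) l"
    by simp
  then show ?case
    using x y by (simp add: nat_pow_pow mult.commute)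
qed

end

theorem mainTheorem11:
  fixes G (structure) and n j :: nat and x y
  assumes "group G"
    and "1 \<le> n"
    and "1 \<le> j" and "j \<le> n"
    and "x \<in> gamma G j"
    and "y \<in> pow_subgroup G (gamma G j) 4 <#>\<^bsub>G\<^esub> gamma G (j + 1)"
  shows "((x \<otimes>\<^bsub>G\<^esub> y) [^]\<^bsub>G\<^esub> ((4::nat) ^ (n - j))) \<otimes>\<^bsub>G\<^esub> inv\<^bsub>G\<^esub> (x [^]\<^bsub>G\<^esub> ((4::nat) ^ (n - j)))
         \<in> Nnk G (n + 1) j"
proof -
  interpret group G by (rule assms(1))
  have "x \<in> gamma_power_product G 4 j j"
    using assms(5) by (simp add: gamma_power_product_ge)
  moreover have "y \<in> gamma_power_product G 4 (Suc j) j"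
    using assms(6) by (simp add: gamma_power_product_less gamma_power_product_ge)
  ultimately have "(x \<otimes> y) [^] ((4::nat) ^ (n - j)) \<otimes> inv (x [^] ((4::nat) ^ (n - j)))
      \<in> gamma_power_product G 4 (j + 1 + (n - j)) j"
    by (rule pow_mult_inv_pow_mem_gamma_power_product[OF le_refl])
  then show ?thesis
    using assms(4) by (simp add: Nnk_eq_gamma_power_product)
qed

end
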